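(* If $m\ge 2$ and $k\ge 3$, the Spencer operator $\mathcal S^1\colon\operatorname{Hom}(V,\mathfrak a)\to\operatorname{Hom}(\wedge^2V,V)$ is injective.
   Context: $\mathfrak a=\mathfrak{sl}(2,\mathbb R)\times\mathfrak{gl}(m,\mathbb R)$ acting faithfully on $V=V_k\otimes W$, where $V_k=S^k(\mathbb R^2)$ is the irreducible $(k+1)$-dimensional $\mathfrak{sl}(2,\mathbb R)$-module and $W=\mathbb R^m$ the standard $\mathfrak{gl}(m,\mathbb R)$-module. $\mathcal S^1(\phi)(v_1\wedge v_2)=-\phi(v_2)v_1+\phi(v_1)v_2$. *)

theory Defs
  imports Complex_Main "HOL-Library.FuncSet"
begin

text \<open>V_k = S^k(R^2) has basis b_i = x^(k-i) y^i (i = 0..k), W = R^m has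
basis w_j (j = 0..m-1); V = V_k \<otimes> W has basis b_i \<otimes> w_j.  A vector of V is
a coefficient array v i j, zero outside i \<le> k, j < m.  Matrices are arrays A r s
(row r, column s), zero outside the relevant index range.\<close>

type_synonym vecV = "nat \<Rightarrow> nat \<Rightarrow> real"
type_synonym mat = "nat \<Rightarrow> nat \<Rightarrow> real"
type_synonym aelem = "mat \<times> mat"

definition Vsp :: "nat \<Rightarrow> nat \<Rightarrow> vecV set" where
  "Vsp k m = {v. \<forall>i j. (k < i \<or> m \<le> j) \<longrightarrow> v i j = 0}"

definition sl2 :: "mat set" where
  "sl2 = {A. (\<forall>r s. (1 < r \<or> 1 < s) \<longrightarrow> A r s = 0) \<and> A 0 0 + A 1 1 = 0}"

definition glm :: "nat \<Rightarrow> mat set" where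
  "glm m = {B. \<forall>r s. (m \<le> r \<or> m \<le> s) \<longrightarrow> B r s = 0}"

definition alg :: "nat \<Rightarrow> aelem set" where
  "alg m = sl2 \<times> glm m"

text \<open>A 2x2 matrix acts on R^2 = span(x,y) by A x = A00 x + A10 y, A y = A01 x + A11 y,
and on S^k(R^2) as a derivation:
A b_i' = ((k-i') A00 + i' A11) b_i' + (k-i') A10 b_(i'+1) + i' A01 b_(i'-1).
sk_coeff k A i i' is the coefficient of b_i in A b_i'.\<close>
definition sk_coeff :: "nat \<Rightarrow> mat \<Rightarrow> nat \<Rightarrow> nat \<Rightarrow> real" where
  "sk_coeff k A i i' =
     (if i = i' then real (k - i') * A 0 0 + real i' * A 1 1
      else if i = Suc i' then real (k - i') * A 1 0
      else if Suc i = i' then real i' * A 0 1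
      else 0)"

text \<open>Action of a = sl(2) x gl(m) on V = V_k \<otimes> W:
(A,B)(p \<otimes> w) = (A p) \<otimes> w + p \<otimes> (B w).\<close>
definition act :: "nat \<Rightarrow> nat \<Rightarrow> aelem \<Rightarrow> vecV \<Rightarrow> vecV" where
  "act k m a v = (\<lambda>i j. if i \<le> k \<and> j < m then
       (\<Sum>i'\<le>k. sk_coeff k (fst a) i i' * v i' j) + (\<Sum>j'<m. snd a j j' * v i j')
     else 0)"

text \<open>Hom(V, a): a linear map \<phi> is given by its values \<Phi> i j = \<phi>(b_i \<otimes> w_j) \<in> a
on the basis (zero outside the index range, for uniqueness).\<close>
definition Hom :: "nat \<Rightarrow> nat \<Rightarrow> (nat \<Rightarrow> nat \<Rightarrow> aelem) set" where
  "Hom k m = {\<Phi>. (\<forall>i j. i \<le> k \<and> j < m \<longrightarrow> \<Phi> i j \<in> alg m) \<and>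
                  (\<forall>i j. (k < i \<or> m \<le> j) \<longrightarrow> \<Phi> i j = (\<lambda>_ _. 0, \<lambda>_ _. 0))}"

definition hom_apply :: "nat \<Rightarrow> nat \<Rightarrow> (nat \<Rightarrow> nat \<Rightarrow> aelem) \<Rightarrow> vecV \<Rightarrow> aelem" where
  "hom_apply k m \<Phi> v =
     ((\<lambda>r s. \<Sum>i\<le>k. \<Sum>j<m. v i j * fst (\<Phi> i j) r s),
      (\<lambda>r s. \<Sum>i\<le>k. \<Sum>j<m. v i j * snd (\<Phi> i j) r s))"

text \<open>Spencer operator: S^1(\<phi>)(v1 \<and> v2) = - \<phi>(v2) v1 + \<phi>(v1) v2.  An element of
Hom(\<and>^2 V, V) is identified with the alternating bilinear map V x V \<rightarrow> V it induces.\<close>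
definition spencer1 :: "nat \<Rightarrow> nat \<Rightarrow> (nat \<Rightarrow> nat \<Rightarrow> aelem) \<Rightarrow> vecV \<Rightarrow> vecV \<Rightarrow> vecV" where
  "spencer1 k m \<Phi> v1 v2 =
     (\<lambda>i j. - act k m (hom_apply k m \<Phi> v2) v1 i j + act k m (hom_apply k m \<Phi> v1) v2 i j)"

end

theory Submission
  imports Defs "HOL-Library.Product_Plus" "HOL-Library.Function_Algebras"
begin

text \<open>Since S^1 is linear in \<phi>, it suffices to show that its kernel is trivial.
Evaluating S^1(\<phi>) on basis vectors b_i \<otimes> w_j and b_i' \<otimes> w_j' with j' \<noteq> j (possible
as m \<ge> 2) shows that the sl(2)-component A of \<phi>(b_i \<otimes> w_j) acts on V_k as a scalar
modulo the line through b_i.  For k \<ge> 3 there are two consecutive basis vectors b_p, b_(p+1)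
off that line; comparing the off-diagonal and diagonal coefficients of A on them forces the
traceless A to vanish.  Once all sl(2)-components are zero, taking i' \<noteq> i kills the
gl(m)-components as well.\<close>

lemma sk_coeff_0 [simp]: "sk_coeff k 0 a b = 0"
  by (simp add: sk_coeff_def)

lemma sk_coeff_diff:
  "sk_coeff k (A - B) a b = sk_coeff k A a b - sk_coeff k B a b"
  by (simp add: sk_coeff_def algebra_simps)

lemma act_diff: "act k m (x - y) v = act k m x v - act k m y v"
  by (simp add: act_def fun_eq_iff sk_coeff_diff algebra_simps sum_subtractf)

lemma hom_apply_diff:
  "hom_apply k m (\<Phi> - \<Psi>) v = hom_apply k m \<Phi> v - hom_apply k m \<Psi> v"
  by (simp add: hom_apply_def fun_eq_iff algebra_simps sum_subtractf)

lemma spencer1_diff: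
  "spencer1 k m (\<Phi> - \<Psi>) v1 v2 = spencer1 k m \<Phi> v1 v2 - spencer1 k m \<Psi> v1 v2"
  by (simp add: spencer1_def hom_apply_diff act_diff fun_eq_iff)

lemma zero_aelem: "(\<lambda>_ _. 0, \<lambda>_ _. 0) = (0 :: aelem)"
  by (simp add: zero_prod_def zero_fun_def)

lemma alg_diff:
  assumes "x \<in> alg m" "y \<in> alg m"
  shows "x - y \<in> alg m"
proof -
  have "fst x 0 0 + fst x 1 1 = 0" "fst y 0 0 + fst y 1 1 = 0"
    using assms by (auto simp: alg_def sl2_def)
  with assms show ?thesis
    by (auto simp: alg_def sl2_def glm_def mem_Times_iff)
qed

lemma Hom_diff:
  assumes "\<Phi> \<in> Hom k m" "\<Psi> \<in> Hom k m"
  shows "\<Phi> - \<Psi> \<in> Hom k m"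
  using assms by (auto simp: Hom_def alg_diff zero_aelem)

definition unit_vec :: "nat \<Rightarrow> nat \<Rightarrow> vecV" where
  "unit_vec i j = (\<lambda>a b. of_bool (a = i \<and> b = j))"

lemma unit_vec_in_Vsp: "i \<le> k \<Longrightarrow> j < m \<Longrightarrow> unit_vec i j \<in> Vsp k m"
  by (auto simp: unit_vec_def Vsp_def)

lemma sum_unit_vec:
  assumes "i \<le> k" "j < m"
  shows "(\<Sum>i'\<le>k. \<Sum>j'<m. unit_vec i j i' j' * f i' j') = f i j"
proof -
  have "(\<Sum>j'<m. unit_vec i j i' j' * f i' j') = (if i' = i then f i j else 0)" for i'
    using assms by (cases "i' = i") (simp_all add: unit_vec_def)
  with assms show ?thesis
    by simp
qed

lemma hom_apply_unit_vec:
  assumes "i \<le> k" "j < m"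
  shows "hom_apply k m \<Phi> (unit_vec i j) = \<Phi> i j"
  using sum_unit_vec[OF assms] by (simp add: hom_apply_def prod_eq_iff)

lemma act_unit_vec:
  assumes "i' \<le> k" "j' < m" "a \<le> k" "b < m"
  shows "act k m x (unit_vec i' j') a b =
    (if b = j' then sk_coeff k (fst x) a i' else 0) + (if a = i' then snd x b j' else 0)"
  using assms by (simp add: act_def unit_vec_def of_bool_def if_distrib
      cong: if_cong)

lemma spencer1_unit_vec:
  assumes "i \<le> k" "j < m" "i' \<le> k" "j' < m"
  shows "spencer1 k m \<Phi> (unit_vec i j) (unit_vec i' j') =
    act k m (\<Phi> i j) (unit_vec i' j') - act k m (\<Phi> i' j') (unit_vec i j)"
  using assms by (simp add: spencer1_def hom_apply_unit_vec fun_eq_iff)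

lemma sl2_eq_0_if_scalar_off_line:
  assumes "A \<in> sl2" "3 \<le> k"
    and scalar: "\<And>a i'. a \<le> k \<Longrightarrow> i' \<le> k \<Longrightarrow> a \<noteq> i \<Longrightarrow> i' \<noteq> i \<Longrightarrow>
                   sk_coeff k A a i' + (if a = i' then c else 0) = 0"
  shows "A = 0"
proof -
  define p where "p = (if i = 0 then 1 else if i = 1 then 2 else (0::nat))"
  have p: "p < k" "p \<noteq> i" "Suc p \<noteq> i"
    using \<open>3 \<le> k\<close> by (auto simp: p_def)
  have "real (k - p) * A 1 0 = 0"
    using scalar[of "Suc p" p] p by (simp add: sk_coeff_def)
  with p have lower: "A 1 0 = 0" by simp
  have "real (Suc p) * A 0 1 = 0"
    using scalar[of p "Suc p"] p by (simp add: sk_coeff_def)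
  hence upper: "A 0 1 = 0" by (simp del: of_nat_Suc)
  have "(real k - real p) * A 0 0 + real p * A 1 1 + c = 0"
    using scalar[of p p] p by (simp add: sk_coeff_def of_nat_diff)
  moreover have "(real k - (1 + real p)) * A 0 0 + (1 + real p) * A 1 1 + c = 0"
    using scalar[of "Suc p" "Suc p"] p by (simp add: sk_coeff_def of_nat_diff)
  moreover have "A 0 0 + A 1 1 = 0"
    using \<open>A \<in> sl2\<close> by (simp add: sl2_def)
  ultimately have diagonal: "A 0 0 = 0" "A 1 1 = 0"
    by (simp_all add: algebra_simps)
  show ?thesis
  proof (intro ext)
    fix r s
    show "A r s = 0 r s"
      using \<open>A \<in> sl2\<close> lower upper diagonal
      by (cases "r \<le> 1 \<and> s \<le> 1") (auto simp: sl2_def le_Suc_eq)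
  qed
qed

context
  fixes k m :: nat and \<Delta> :: "nat \<Rightarrow> nat \<Rightarrow> aelem"
  assumes \<Delta>_Hom: "\<Delta> \<in> Hom k m"
    and kernel: "\<And>v1 v2. v1 \<in> Vsp k m \<Longrightarrow> v2 \<in> Vsp k m \<Longrightarrow> spencer1 k m \<Delta> v1 v2 = 0"
begin

lemma spencer1_kernel_coeff:
  assumes "i \<le> k" "j < m" "i' \<le> k" "j' < m" "a \<le> k" "b < m"
  shows "(if b = j' then sk_coeff k (fst (\<Delta> i j)) a i' else 0) + (if a = i' then snd (\<Delta> i j) b j' else 0)
       = (if b = j then sk_coeff k (fst (\<Delta> i' j')) a i else 0) + (if a = i then snd (\<Delta> i' j') b j else 0)"
proof -
  have "spencer1 k m \<Delta> (unit_vec i j) (unit_vec i' j') a b = 0"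
    using kernel[OF unit_vec_in_Vsp unit_vec_in_Vsp] assms by simp
  with assms show ?thesis
    by (simp add: spencer1_unit_vec act_unit_vec)
qed

lemma spencer1_kernel_in_alg: "i \<le> k \<Longrightarrow> j < m \<Longrightarrow> \<Delta> i j \<in> alg m"
  using \<Delta>_Hom by (simp add: Hom_def)

lemma spencer1_kernel_sl2_part:
  assumes "2 \<le> m" "3 \<le> k" "i \<le> k" "j < m"
  shows "fst (\<Delta> i j) = 0"
proof -
  define j' where "j' = (if j = 0 then 1 else (0::nat))"
  have j': "j' < m" "j' \<noteq> j"
    using \<open>2 \<le> m\<close> by (auto simp: j'_def)
  show ?thesis
  proof (rule sl2_eq_0_if_scalar_off_line)
    show "fst (\<Delta> i j) \<in> sl2"
      using spencer1_kernel_in_alg[OF \<open>i \<le> k\<close> \<open>j < m\<close>] by (simp add: alg_def mem_Times_iff)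
    show "sk_coeff k (fst (\<Delta> i j)) a i' + (if a = i' then snd (\<Delta> i j) j' j' else 0) = 0"
      if "a \<le> k" "i' \<le> k" "a \<noteq> i" "i' \<noteq> i" for a i'
      using spencer1_kernel_coeff[of i j i' j' a j'] assms j' that by simp
  qed fact
qed

lemma spencer1_kernel_gl_part:
  assumes "2 \<le> m" "3 \<le> k" "i \<le> k" "j < m"
  shows "snd (\<Delta> i j) = 0"
proof (intro ext)
  fix b c
  show "snd (\<Delta> i j) b c = 0 b c"
  proof (cases "b < m \<and> c < m")
    case True
    then have "b < m" "c < m"
      by simp_all
    define i' where "i' = (if i = 0 then 1 else (0::nat))"
    have "i' \<le> k" "i' \<noteq> i"
      using \<open>3 \<le> k\<close> by (auto simp: i'_def)
    with spencer1_kernel_coeff[OF \<open>i \<le> k\<close> \<open>j < m\<close> \<open>i' \<le> k\<close> \<open>c < m\<close> \<open>i' \<le> k\<close> \<open>b < m\<close>]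
    show ?thesis
      by (simp add: spencer1_kernel_sl2_part assms \<open>c < m\<close> cong: if_cong)
  next
    case False
    with spencer1_kernel_in_alg[OF \<open>i \<le> k\<close> \<open>j < m\<close>] show ?thesis
      by (auto simp: alg_def glm_def mem_Times_iff)
  qed
qed

lemma spencer1_kernel_trivial:
  assumes "2 \<le> m" "3 \<le> k"
  shows "\<Delta> = 0"
proof (intro ext)
  fix i j
  show "\<Delta> i j = 0 i j"
  proof (cases "i \<le> k \<and> j < m")
    case True
    with assms show ?thesis
      by (simp add: prod_eq_iff spencer1_kernel_sl2_part spencer1_kernel_gl_part)
  next
    case False
    with \<Delta>_Hom show ?thesis
      by (auto simp: Hom_def zero_aelem not_le not_less)
  qed
qed

end

theorem lemma3:
  fixes k m :: nat
  assumes "2 \<le> m" and "3 \<le> k"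
  shows "inj_on (\<lambda>\<Phi>. restrict (\<lambda>p. spencer1 k m \<Phi> (fst p) (snd p)) (Vsp k m \<times> Vsp k m))
                (Hom k m)"
proof (rule inj_onI)
  fix \<Phi> \<Psi>
  assume "\<Phi> \<in> Hom k m" "\<Psi> \<in> Hom k m"
    and same: "restrict (\<lambda>p. spencer1 k m \<Phi> (fst p) (snd p)) (Vsp k m \<times> Vsp k m) =
               restrict (\<lambda>p. spencer1 k m \<Psi> (fst p) (snd p)) (Vsp k m \<times> Vsp k m)"
  have "spencer1 k m (\<Phi> - \<Psi>) v1 v2 = 0" if "v1 \<in> Vsp k m" "v2 \<in> Vsp k m" for v1 v2
    using fun_cong[OF same, of "(v1, v2)"] that by (simp add: spencer1_diff)
  from Hom_diff[OF \<open>\<Phi> \<in> Hom k m\<close> \<open>\<Psi> \<in> Hom k m\<close>] this assms have "\<Phi> - \<Psi> = 0"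
    by (rule spencer1_kernel_trivial)
  then show "\<Phi> = \<Psi>"
    by simp
qed

end
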